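(* Suppose that $\phi\in\mathbb{Q}(x)$ has degree $2$, has a $2$-periodic critical point, and that $\operatorname{Aut}(\phi)$ is trivial. Then $\phi$ is linearly conjugate over $\mathbb{Q}$ to a map of the form $\phi_v=\dfrac{v(x-1)}{x^2}$ with $v\in\mathbb{Q}\setminus\{0\}$.
   Context: A point $P\in\mathbb{P}^1(\overline{\mathbb{Q}})$ is $2$-periodic if $\phi^2(P)=P\neq\phi(P)$; a critical point is a point where $\phi:\mathbb{P}^1\to\mathbb{P}^1$ ramifies. $\operatorname{Aut}(\phi)$ is the group of degree-one $\sigma\in\overline{\mathbb{Q}}(x)$ with $\sigma^{-1}\circ\phi\circ\sigma=\phi$. Linear conjugacy over $\mathbb{Q}$: $\psi=\sigma^{-1}\circ\phi\circ\sigma$ for some degree-one $\sigma\in\mathbb{Q}(x)$. *)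

theory Defs
  imports Complex_Main "HOL-Computational_Algebra.Computational_Algebra"
begin

text \<open>A rational function phi in Q(x) is represented by a pair (p, q) of polynomials
  over Q with phi = p/q; it is in lowest terms when p, q are coprime and q is nonzero.  The projective line P^1 over C is modelled by
  complex option, with None the point at infinity; P^1(Qbar) is the subset of points
  with algebraic coordinate.\<close>

type_synonym ratmap = "rat poly \<times> rat poly"

definition rm_deg :: "ratmap \<Rightarrow> nat" where
  "rm_deg phi = max (degree (fst phi)) (degree (snd phi))"

definition rm_valid :: "ratmap \<Rightarrow> bool" where
  "rm_valid phi \<longleftrightarrow> snd phi \<noteq> 0 \<and> coprime (fst phi) (snd phi)"

definition rm_num :: "ratmap \<Rightarrow> complex poly" where
  "rm_num phi = map_poly of_rat (fst phi)"

definition rm_den :: "ratmap \<Rightarrow> complex poly" where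
  "rm_den phi = map_poly of_rat (snd phi)"

definition rm_eval :: "ratmap \<Rightarrow> complex option \<Rightarrow> complex option" where
  "rm_eval phi x = (case x of
      Some z \<Rightarrow> (if poly (rm_den phi) z = 0 then None
                 else Some (poly (rm_num phi) z / poly (rm_den phi) z))
    | None \<Rightarrow> (if degree (fst phi) > degree (snd phi) then None
              else Some (coeff (rm_num phi) (rm_deg phi) / coeff (rm_den phi) (rm_deg phi))))"

text \<open>The (dehomogenised) form whose zeros are the preimages of a point w:
  p - w q for finite w, and q for w = infinity.\<close>
definition rm_fiber_poly :: "ratmap \<Rightarrow> complex option \<Rightarrow> complex poly" where
  "rm_fiber_poly phi w = (case w of
      Some a \<Rightarrow> rm_num phi - smult a (rm_den phi)
    | None \<Rightarrow> rm_den phi)"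

text \<open>Ramification index e_P(phi): multiplicity of P as a solution of phi(x) = phi(P)
  (order of vanishing at P of the homogeneous form b F - a G, where phi(P) = [a:b]).\<close>
definition ram_index :: "ratmap \<Rightarrow> complex option \<Rightarrow> nat" where
  "ram_index phi x = (let H = rm_fiber_poly phi (rm_eval phi x) in
     (case x of Some z \<Rightarrow> order z H | None \<Rightarrow> rm_deg phi - degree H))"

definition critical_pt :: "ratmap \<Rightarrow> complex option \<Rightarrow> bool" where
  "critical_pt phi x \<longleftrightarrow> ram_index phi x \<ge> 2"

definition alg_pt :: "complex option \<Rightarrow> bool" where
  "alg_pt x \<longleftrightarrow> (case x of None \<Rightarrow> True | Some z \<Rightarrow> algebraic z)"

definition two_periodic :: "ratmap \<Rightarrow> complex option \<Rightarrow> bool" where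
  "two_periodic phi x \<longleftrightarrow> rm_eval phi (rm_eval phi x) = x \<and> rm_eval phi x \<noteq> x"

definition mob :: "complex \<times> complex \<times> complex \<times> complex \<Rightarrow> complex option \<Rightarrow> complex option" where
  "mob s x = (case s of (a, b, c, d) \<Rightarrow> (case x of
      Some z \<Rightarrow> (if c * z + d = 0 then None else Some ((a * z + b) / (c * z + d)))
    | None \<Rightarrow> (if c = 0 then None else Some (a / c))))"

definition mob_nondeg :: "complex \<times> complex \<times> complex \<times> complex \<Rightarrow> bool" where
  "mob_nondeg s \<longleftrightarrow> (case s of (a, b, c, d) \<Rightarrow> a * d - b * c \<noteq> 0)"

definition mob_alg :: "complex \<times> complex \<times> complex \<times> complex \<Rightarrow> bool" where
  "mob_alg s \<longleftrightarrow> (case s of (a, b, c, d) \<Rightarrow> algebraic a \<and> algebraic b \<and> algebraic c \<and> algebraic d)"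

text \<open>sigma is in Aut(phi): sigma^-1 o phi o sigma = phi, i.e. phi o sigma = sigma o phi.\<close>
definition in_Aut :: "ratmap \<Rightarrow> complex \<times> complex \<times> complex \<times> complex \<Rightarrow> bool" where
  "in_Aut phi s \<longleftrightarrow> mob_nondeg s \<and> mob_alg s \<and>
     (\<forall>x. rm_eval phi (mob s x) = mob s (rm_eval phi x))"

definition Aut_trivial :: "ratmap \<Rightarrow> bool" where
  "Aut_trivial phi \<longleftrightarrow> (\<forall>s. in_Aut phi s \<longrightarrow> (\<forall>x. mob s x = x))"

text \<open>phi and psi are linearly conjugate over Q: psi = sigma^-1 o phi o sigma for some
  degree-one sigma in Q(x), i.e. phi o sigma = sigma o psi.\<close>
definition lin_conj_Q :: "ratmap \<Rightarrow> ratmap \<Rightarrow> bool" where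
  "lin_conj_Q phi psi \<longleftrightarrow> (\<exists>a b c d :: rat. a * d - b * c \<noteq> 0 \<and>
     (let s = (of_rat a, of_rat b, of_rat c, of_rat d) in
       (\<forall>x. rm_eval phi (mob s x) = mob s (rm_eval psi x))))"

definition phi_v :: "rat \<Rightarrow> ratmap" where
  "phi_v v = ([:-v, v:], [:0, 0, 1:])"

end

theory Submission
  imports Defs
begin

text \<open>
  Write \<open>\<phi> = [F : G]\<close> with binary quadratic forms \<open>F, G\<close> over \<open>\<rat>\<close>; its critical points
  are the zeros of the Wronskian, a nonzero binary quadratic form over \<open>\<rat>\<close>. Conjugating by
  a Moebius map that sends \<open>0\<close> to the 2-periodic critical point \<open>P\<close> and \<open>\<infinity>\<close> to \<open>\<phi>(P)\<close> gives the
  normal form \<open>(f\<^sub>1 x + f\<^sub>0) / (g\<^sub>2 x\<^sup>2)\<close>. Its other critical point, \<open>-2 f\<^sub>0 / f\<^sub>1\<close> or \<open>\<infinity>\<close>, is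
  2-periodic only when it is \<open>\<infinity> = \<phi>(P)\<close>, i.e. \<open>f\<^sub>1 = 0\<close>; and \<open>f\<^sub>0 / (g\<^sub>2 x\<^sup>2)\<close> commutes with
  \<open>x \<mapsto> \<omega> x\<close> for a primitive cube root of unity \<open>\<omega>\<close>, which contradicts \<open>Aut(\<phi>) = 1\<close>.

  If \<open>P\<close> is rational, so is the conjugating map; as \<open>f\<^sub>1 \<noteq> 0\<close>, a rescaling \<open>x \<mapsto> \<lambda> x\<close> over \<open>\<rat>\<close>
  turns the normal form into \<open>v (x - 1) / x\<^sup>2\<close>. If \<open>P = z\<close> is irrational, it is a quadratic
  irrationality whose Galois conjugate \<open>z'\<close> is again a 2-periodic critical point; hence
  \<open>\<phi>(z) = z'\<close>, \<open>f\<^sub>1 = 0\<close>, and the resulting automorphism has coefficients in \<open>\<rat>(z, \<omega>)\<close>, so it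
  is algebraic. Galois conjugation is realised by hand on \<open>\<rat>(z) = {\<alpha> + \<beta> z}\<close>.
\<close>

section \<open>Points of the projective line\<close>

definition proj_pt :: "complex \<Rightarrow> complex \<Rightarrow> complex option" where
  "proj_pt X Y = (if Y = 0 then None else Some (X / Y))"

lemma proj_pt_infinity: "proj_pt 1 0 = None"
  by (simp add: proj_pt_def)

lemma proj_pt_Some: "proj_pt z 1 = Some z"
  by (simp add: proj_pt_def)

lemma proj_pt_cases:
  obtains X Y where "(X, Y) \<noteq> (0, 0)" "P = proj_pt X Y"
proof (cases P)
  case None
  then show ?thesis using that[of 1 0] by (simp add: proj_pt_def)
next
  case (Some z)
  then show ?thesis using that[of z 1] by (simp add: proj_pt_def)
qed

lemma proj_pt_rational_cases:
  obtains (rational) X0 Y0 :: rat where "(X0, Y0) \<noteq> (0, 0)" "P = proj_pt (of_rat X0) (of_rat Y0)"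
  | (irrational) z where "P = Some z" "z \<notin> \<rat>"
proof (cases P)
  case None
  then show ?thesis using rational[of 1 0] by (simp add: proj_pt_infinity)
next
  case (Some z)
  show ?thesis
  proof (cases "z \<in> \<rat>")
    case True
    then obtain r where "z = of_rat r" by (auto elim: Rats_cases)
    then show ?thesis using rational[of r 1] Some by (simp add: proj_pt_Some)
  next
    case False
    then show ?thesis using irrational Some by blast
  qed
qed

lemma proj_pt_scale: "k \<noteq> 0 \<Longrightarrow> proj_pt (k * X) (k * Y) = proj_pt X Y"
  by (simp add: proj_pt_def)

lemma proj_pt_eq_iff:
  assumes "(X, Y) \<noteq> (0, 0)" "(X', Y') \<noteq> (0, 0)"
  shows "proj_pt X Y = proj_pt X' Y' \<longleftrightarrow> X * Y' = X' * Y"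
  using assms by (auto simp add: proj_pt_def field_simps)

lemma matrix_vector_nonzero:
  assumes "a * d - b * c \<noteq> (0::'a::idom)" "(X, Y) \<noteq> (0, 0)"
  shows "(a * X + b * Y, c * X + d * Y) \<noteq> (0, 0)"
proof
  assume "(a * X + b * Y, c * X + d * Y) = (0, 0)"
  moreover have "(a * d - b * c) * X = d * (a * X + b * Y) - b * (c * X + d * Y)"
    "(a * d - b * c) * Y = a * (c * X + d * Y) - c * (a * X + b * Y)"
    by (simp_all add: algebra_simps)
  ultimately show False using assms by auto
qed

lemma mob_proj_pt:
  assumes "a * d - b * c \<noteq> 0" "(X, Y) \<noteq> (0, 0)"
  shows "mob (a, b, c, d) (proj_pt X Y) = proj_pt (a * X + b * Y) (c * X + d * Y)"
proof (cases "Y = 0")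
  case True
  then show ?thesis using assms by (auto simp add: proj_pt_def mob_def)
next
  case False
  have "c * X / Y + d = (c * X + d * Y) / Y" "a * X / Y + b = (a * X + b * Y) / Y"
    using False by (auto simp add: field_simps)
  then show ?thesis using False by (simp add: proj_pt_def mob_def)
qed

lemma mob_mob:
  assumes "a * d - b * c \<noteq> 0" "a' * d' - b' * c' \<noteq> 0"
  shows "mob (a, b, c, d) (mob (a', b', c', d') P) =
         mob (a * a' + b * c', a * b' + b * d', c * a' + d * c', c * b' + d * d') P"
proof -
  obtain X Y where XY: "(X, Y) \<noteq> (0, 0)" "P = proj_pt X Y" by (rule proj_pt_cases)
  have "(a * a' + b * c') * (c * b' + d * d') - (a * b' + b * d') * (c * a' + d * c')
      = (a * d - b * c) * (a' * d' - b' * c')"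
    by (simp add: algebra_simps)
  then have det: "(a * a' + b * c') * (c * b' + d * d') - (a * b' + b * d') * (c * a' + d * c') \<noteq> 0"
    using assms by simp
  have "mob (a, b, c, d) (mob (a', b', c', d') P) = proj_pt
      (a * (a' * X + b' * Y) + b * (c' * X + d' * Y)) (c * (a' * X + b' * Y) + d * (c' * X + d' * Y))"
    using XY matrix_vector_nonzero[OF assms(2) XY(1)]
    by (simp add: mob_proj_pt[OF assms(2)] mob_proj_pt[OF assms(1)])
  also have "\<dots> = mob (a * a' + b * c', a * b' + b * d', c * a' + d * c', c * b' + d * d') P"
    using XY by (simp add: mob_proj_pt[OF det]) (simp add: algebra_simps)
  finally show ?thesis .
qed

lemma mob_adj_mob:
  assumes "a * d - b * c \<noteq> 0"
  shows "mob (d, -b, -c, a) (mob (a, b, c, d) P) = P"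
proof -
  have "mob (d, -b, -c, a) (mob (a, b, c, d) P) = mob (a * d - b * c, 0, 0, a * d - b * c) P"
    using mob_mob[where a = d and b = "-b" and c = "-c" and d = a and a' = a and b' = b
        and c' = c and d' = d] assms by (simp add: algebra_simps)
  then show ?thesis using assms by (cases P) (auto simp: mob_def)
qed

lemma mob_mob_adj:
  assumes "a * d - b * c \<noteq> 0"
  shows "mob (a, b, c, d) (mob (d, -b, -c, a) P) = P"
  using mob_adj_mob[where a = d and b = "-b" and c = "-c" and d = a] assms by (simp add: algebra_simps)

section \<open>Maps given by two binary quadratic forms\<close>

datatype 'a qpair = QPair (qf2: 'a) (qf1: 'a) (qf0: 'a) (qg2: 'a) (qg1: 'a) (qg0: 'a)

definition qF :: "'a::comm_ring_1 qpair \<Rightarrow> 'a \<Rightarrow> 'a \<Rightarrow> 'a" where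
  "qF h X Y = qf2 h * X^2 + qf1 h * X * Y + qf0 h * Y^2"

definition qG :: "'a::comm_ring_1 qpair \<Rightarrow> 'a \<Rightarrow> 'a \<Rightarrow> 'a" where
  "qG h X Y = qg2 h * X^2 + qg1 h * X * Y + qg0 h * Y^2"

text \<open>Half the Jacobian determinant \<open>F\<^sub>X G\<^sub>Y - F\<^sub>Y G\<^sub>X\<close>; its zeros are the critical points.\<close>
definition qW :: "'a::comm_ring_1 qpair \<Rightarrow> 'a \<Rightarrow> 'a \<Rightarrow> 'a" where
  "qW h X Y = (qf2 h * qg1 h - qf1 h * qg2 h) * X^2 + 2 * (qf2 h * qg0 h - qf0 h * qg2 h) * X * Y
     + (qf1 h * qg0 h - qf0 h * qg1 h) * Y^2"

text \<open>The pair \<open>(d F\<circ>\<sigma> - b G\<circ>\<sigma>, a G\<circ>\<sigma> - c F\<circ>\<sigma>)\<close>, which represents \<open>\<sigma>\<inverse> \<circ> \<phi> \<circ> \<sigma>\<close> for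
  \<open>\<sigma> = [[a, b], [c, d]]\<close>: the adjugate matrix induces \<open>\<sigma>\<inverse>\<close>.\<close>
definition qconj :: "'a::comm_ring_1 \<Rightarrow> 'a \<Rightarrow> 'a \<Rightarrow> 'a \<Rightarrow> 'a qpair \<Rightarrow> 'a qpair" where
  "qconj a b c d h = (let
     F2 = qf2 h * a^2 + qf1 h * a * c + qf0 h * c^2;
     F1 = 2 * qf2 h * a * b + qf1 h * (a * d + b * c) + 2 * qf0 h * c * d;
     F0 = qf2 h * b^2 + qf1 h * b * d + qf0 h * d^2;
     G2 = qg2 h * a^2 + qg1 h * a * c + qg0 h * c^2;
     G1 = 2 * qg2 h * a * b + qg1 h * (a * d + b * c) + 2 * qg0 h * c * d;
     G0 = qg2 h * b^2 + qg1 h * b * d + qg0 h * d^2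
   in QPair (d * F2 - b * G2) (d * F1 - b * G1) (d * F0 - b * G0)
         (a * G2 - c * F2) (a * G1 - c * F1) (a * G0 - c * F0))"

definition qscale :: "'a::comm_ring_1 \<Rightarrow> 'a qpair \<Rightarrow> 'a qpair" where
  "qscale k h = map_qpair (\<lambda>x. k * x) h"

lemma qF_qconj:
  "qF (qconj a b c d h) X Y
     = d * qF h (a * X + b * Y) (c * X + d * Y) - b * qG h (a * X + b * Y) (c * X + d * Y)"
  by (simp add: qF_def qG_def qconj_def Let_def power2_eq_square algebra_simps)

lemma qG_qconj:
  "qG (qconj a b c d h) X Y
     = a * qG h (a * X + b * Y) (c * X + d * Y) - c * qF h (a * X + b * Y) (c * X + d * Y)"
  by (simp add: qF_def qG_def qconj_def Let_def power2_eq_square algebra_simps)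

lemma qW_qconj: "qW (qconj a b c d h) X Y = (a * d - b * c)^2 * qW h (a * X + b * Y) (c * X + d * Y)"
  by (simp add: qW_def qconj_def Let_def power2_eq_square algebra_simps)

lemma qconj_qconj:
  "qconj a' b' c' d' (qconj a b c d h)
     = qconj (a * a' + b * c') (a * b' + b * d') (c * a' + d * c') (c * b' + d * d') h"
  by (simp add: qconj_def Let_def power2_eq_square algebra_simps)

lemma qF_homogeneous: "qF h (k * X) (k * Y) = k^2 * qF h X Y"
  by (simp add: qF_def power2_eq_square algebra_simps)

lemma qG_homogeneous: "qG h (k * X) (k * Y) = k^2 * qG h X Y"
  by (simp add: qG_def power2_eq_square algebra_simps)

lemma qW_homogeneous: "qW h (k * X) (k * Y) = k^2 * qW h X Y"
  by (simp add: qW_def power2_eq_square algebra_simps)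

lemma qF_of_rat: "qF (map_qpair of_rat h) (of_rat X) (of_rat Y) = of_rat (qF h X Y)"
  by (simp add: qF_def qpair.map_sel of_rat_add of_rat_mult of_rat_power)

lemma qG_of_rat: "qG (map_qpair of_rat h) (of_rat X) (of_rat Y) = of_rat (qG h X Y)"
  by (simp add: qG_def qpair.map_sel of_rat_add of_rat_mult of_rat_power)

lemma qconj_of_rat:
  "qconj (of_rat a) (of_rat b) (of_rat c) (of_rat d) (map_qpair of_rat h)
     = map_qpair of_rat (qconj a b c d h)"
  by (simp add: qconj_def qpair.map_sel Let_def of_rat_add of_rat_mult of_rat_power of_rat_diff)

lemma qscale_of_rat: "qscale (of_rat k) (map_qpair of_rat h) = map_qpair of_rat (qscale k h)"
  by (simp add: qscale_def qpair.map_comp o_def of_rat_mult)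

definition qeval :: "complex qpair \<Rightarrow> complex option \<Rightarrow> complex option" where
  "qeval h P = (case P of
      None \<Rightarrow> proj_pt (qf2 h) (qg2 h)
    | Some z \<Rightarrow> proj_pt (qF h z 1) (qG h z 1))"

definition qvalid :: "complex qpair \<Rightarrow> bool" where
  "qvalid h \<longleftrightarrow> (\<forall>X Y. qF h X Y = 0 \<and> qG h X Y = 0 \<longrightarrow> X = 0 \<and> Y = 0)"

definition qcrit :: "complex qpair \<Rightarrow> complex option \<Rightarrow> bool" where
  "qcrit h P = (case P of
      None \<Rightarrow> qf2 h * qg1 h - qf1 h * qg2 h = 0
    | Some z \<Rightarrow> qW h z 1 = 0)"

definition qtwo_periodic :: "complex qpair \<Rightarrow> complex option \<Rightarrow> bool" where
  "qtwo_periodic h P \<longleftrightarrow> qeval h (qeval h P) = P \<and> qeval h P \<noteq> P"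

lemma qvalidD: "qvalid h \<Longrightarrow> (X, Y) \<noteq> (0, 0) \<Longrightarrow> (qF h X Y, qG h X Y) \<noteq> (0, 0)"
  unfolding qvalid_def by blast

lemma qeval_proj_pt:
  assumes "qvalid h" "(X, Y) \<noteq> (0, 0)"
  shows "qeval h (proj_pt X Y) = proj_pt (qF h X Y) (qG h X Y)"
proof (cases "Y = 0")
  case True
  then have "X \<noteq> 0" using assms by auto
  moreover have "qF h X Y = X^2 * qf2 h" "qG h X Y = X^2 * qg2 h"
    using True by (simp_all add: qF_def qG_def)
  ultimately show ?thesis using True by (simp add: qeval_def proj_pt_def proj_pt_scale)
next
  case False
  have "qF h X Y = Y^2 * qF h (X / Y) 1" "qG h X Y = Y^2 * qG h (X / Y) 1"
    using qF_homogeneous[of h Y "X / Y" 1] qG_homogeneous[of h Y "X / Y" 1] False by simp_all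
  then show ?thesis using False by (simp add: qeval_def proj_pt_def proj_pt_scale)
qed

lemma qcrit_proj_pt:
  assumes "(X, Y) \<noteq> (0, 0)"
  shows "qcrit h (proj_pt X Y) \<longleftrightarrow> qW h X Y = 0"
proof (cases "Y = 0")
  case True
  then show ?thesis using assms by (simp add: qcrit_def proj_pt_def qW_def)
next
  case False
  have "qW h X Y = Y^2 * qW h (X / Y) 1"
    using qW_homogeneous[of h Y "X / Y" 1] False by simp
  then show ?thesis using False by (simp add: qcrit_def proj_pt_def)
qed

lemma qvalid_qconj:
  assumes "qvalid h" "a * d - b * c \<noteq> 0"
  shows "qvalid (qconj a b c d h)"
  unfolding qvalid_def
proof (intro allI impI)
  fix X Y
  assume zero: "qF (qconj a b c d h) X Y = 0 \<and> qG (qconj a b c d h) X Y = 0"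
  let ?F = "qF h (a * X + b * Y) (c * X + d * Y)" and ?G = "qG h (a * X + b * Y) (c * X + d * Y)"
  have e: "d * ?F - b * ?G = 0" "a * ?G - c * ?F = 0"
    using zero by (simp_all add: qF_qconj qG_qconj)
  have "(a * d - b * c) * ?F = a * (d * ?F - b * ?G) + b * (a * ?G - c * ?F)"
    "(a * d - b * c) * ?G = d * (a * ?G - c * ?F) + c * (d * ?F - b * ?G)"
    by (simp_all add: algebra_simps)
  then have "(a * d - b * c) * ?F = 0" "(a * d - b * c) * ?G = 0"
    unfolding e by simp_all
  then have "?F = 0" "?G = 0" using assms(2) by simp_all
  then show "X = 0 \<and> Y = 0"
    using qvalidD[OF assms(1) matrix_vector_nonzero[OF assms(2)]] by blast
qed

lemma qeval_qconj:
  assumes "qvalid h" "a * d - b * c \<noteq> 0"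
  shows "qeval h (mob (a, b, c, d) P) = mob (a, b, c, d) (qeval (qconj a b c d h) P)"
proof -
  obtain X Y where XY: "(X, Y) \<noteq> (0, 0)" "P = proj_pt X Y" by (rule proj_pt_cases)
  let ?F = "qF h (a * X + b * Y) (c * X + d * Y)" and ?G = "qG h (a * X + b * Y) (c * X + d * Y)"
  have "mob (a, b, c, d) (qeval (qconj a b c d h) P)
     = proj_pt (a * (d * ?F - b * ?G) + b * (a * ?G - c * ?F)) (c * (d * ?F - b * ?G) + d * (a * ?G - c * ?F))"
    using XY qvalidD[OF qvalid_qconj[OF assms] XY(1)]
    by (simp add: qeval_proj_pt[OF qvalid_qconj[OF assms]] mob_proj_pt[OF assms(2)] qF_qconj qG_qconj)
  also have "\<dots> = proj_pt ((a * d - b * c) * ?F) ((a * d - b * c) * ?G)"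
    by (rule arg_cong2[where f = proj_pt]) (simp_all add: algebra_simps)
  also have "\<dots> = qeval h (mob (a, b, c, d) P)"
    using XY matrix_vector_nonzero[OF assms(2) XY(1)] assms
    by (simp add: proj_pt_scale qeval_proj_pt mob_proj_pt)
  finally show ?thesis by simp
qed

lemma qcrit_qconj:
  assumes "a * d - b * c \<noteq> 0"
  shows "qcrit (qconj a b c d h) P \<longleftrightarrow> qcrit h (mob (a, b, c, d) P)"
proof -
  obtain X Y where XY: "(X, Y) \<noteq> (0, 0)" "P = proj_pt X Y" by (rule proj_pt_cases)
  then show ?thesis using matrix_vector_nonzero[OF assms XY(1)] assms
    by (simp add: qcrit_proj_pt mob_proj_pt qW_qconj)
qed

lemma qtwo_periodic_qconj:
  assumes "qvalid h" "a * d - b * c \<noteq> 0"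
  shows "qtwo_periodic (qconj a b c d h) P \<longleftrightarrow> qtwo_periodic h (mob (a, b, c, d) P)"
  using qeval_qconj[OF assms] mob_adj_mob[OF assms(2)] unfolding qtwo_periodic_def by metis

lemma qeval_qscale:
  assumes "k \<noteq> 0"
  shows "qeval (qscale k h) P = qeval h P"
proof -
  have "qF (qscale k h) X Y = k * qF h X Y" "qG (qscale k h) X Y = k * qG h X Y" for X Y
    by (simp_all add: qscale_def qF_def qG_def qpair.map_sel algebra_simps)
  then show ?thesis
    using assms
    by (cases P) (simp_all add: qeval_def proj_pt_scale, simp add: qscale_def qpair.map_sel proj_pt_scale)
qed

lemma complex_poly_has_root: "degree (p :: complex poly) \<noteq> 0 \<Longrightarrow> \<exists>z. poly p z = 0"
  using fundamental_theorem_of_algebra[of p] constant_degree[of p] by simp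

lemma quadratic_form_has_zero:
  "\<exists>X Y. (X, Y) \<noteq> (0, 0) \<and> a * X^2 + b * X * Y + c * (Y::complex)^2 = 0"
proof (cases "a = 0")
  case True
  then show ?thesis by (intro exI[of _ 1] exI[of _ 0]) simp
next
  case False
  then obtain w where "poly [:c, b, a:] w = 0" using complex_poly_has_root[of "[:c, b, a:]"] by auto
  then show ?thesis by (intro exI[of _ w] exI[of _ 1]) (simp add: algebra_simps power2_eq_square)
qed

lemma qvalid_qW_nonzero:
  assumes valid: "qvalid h"
  shows "qf2 h * qg1 h - qf1 h * qg2 h \<noteq> 0 \<or> qf2 h * qg0 h - qf0 h * qg2 h \<noteq> 0
    \<or> qf1 h * qg0 h - qf0 h * qg1 h \<noteq> 0"
proof (rule ccontr)
  assume "\<not> ?thesis"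
  then have W: "qf2 h * qg1 h - qf1 h * qg2 h = 0" "qf2 h * qg0 h - qf0 h * qg2 h = 0"
    "qf1 h * qg0 h - qf0 h * qg1 h = 0" by simp_all
  have "qg2 h * qF h X Y - qf2 h * qG h X Y
      = - (qf2 h * qg1 h - qf1 h * qg2 h) * X * Y - (qf2 h * qg0 h - qf0 h * qg2 h) * Y^2"
    "qg1 h * qF h X Y - qf1 h * qG h X Y
      = (qf2 h * qg1 h - qf1 h * qg2 h) * X^2 - (qf1 h * qg0 h - qf0 h * qg1 h) * Y^2"
    "qg0 h * qF h X Y - qf0 h * qG h X Y
      = (qf2 h * qg0 h - qf0 h * qg2 h) * X^2 + (qf1 h * qg0 h - qf0 h * qg1 h) * X * Y" for X Y
    by (simp_all add: qF_def qG_def algebra_simps)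
  then have proportional: "qg2 h * qF h X Y = qf2 h * qG h X Y" "qg1 h * qF h X Y = qf1 h * qG h X Y"
    "qg0 h * qF h X Y = qf0 h * qG h X Y" for X Y
    unfolding W by simp_all
  show False
  proof (cases "qg2 h = 0 \<and> qg1 h = 0 \<and> qg0 h = 0")
    case True
    obtain X Y where "(X, Y) \<noteq> (0, 0)" "qF h X Y = 0"
      using quadratic_form_has_zero[of "qf2 h" "qf1 h" "qf0 h"] by (auto simp: qF_def)
    then show False using qvalidD[OF valid] True by (force simp: qG_def)
  next
    case False
    obtain X Y where "(X, Y) \<noteq> (0, 0)" "qG h X Y = 0"
      using quadratic_form_has_zero[of "qg2 h" "qg1 h" "qg0 h"] by (auto simp: qG_def)
    then show False using qvalidD[OF valid] proportional[of X Y] False by auto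
  qed
qed

section \<open>Rational maps of degree two\<close>

definition qpair_of :: "ratmap \<Rightarrow> rat qpair" where
  "qpair_of phi = QPair (coeff (fst phi) 2) (coeff (fst phi) 1) (coeff (fst phi) 0)
                        (coeff (snd phi) 2) (coeff (snd phi) 1) (coeff (snd phi) 0)"

abbreviation qpairC :: "ratmap \<Rightarrow> complex qpair" where
  "qpairC phi \<equiv> map_qpair of_rat (qpair_of phi)"

lemma map_poly_of_rat_add:
  "map_poly (of_rat :: rat \<Rightarrow> 'a::field_char_0) (p + q) = map_poly of_rat p + map_poly of_rat q"
  by (rule poly_eqI) (simp add: coeff_map_poly of_rat_add)

lemma map_poly_of_rat_mult:
  "map_poly (of_rat :: rat \<Rightarrow> 'a::field_char_0) (p * q) = map_poly of_rat p * map_poly of_rat q"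
  by (rule poly_eqI) (simp add: coeff_map_poly coeff_mult of_rat_sum of_rat_mult)

text \<open>A rational polynomial of least degree vanishing at \<open>z\<close> divides every other one
  (division with remainder), so it would be a non-unit common divisor of \<open>p\<close> and \<open>q\<close>.\<close>
lemma coprime_no_common_root:
  fixes p q :: "rat poly" and z :: "'a::field_char_0"
  assumes "coprime p q" "poly (map_poly of_rat p) z = 0" "poly (map_poly of_rat q) z = 0"
  shows False
proof -
  define S where "S = {r :: rat poly. r \<noteq> 0 \<and> poly (map_poly of_rat r) z = 0}"
  have "p \<noteq> 0 \<or> q \<noteq> 0" using assms(1) by auto
  then have "\<exists>r. r \<in> S" using assms(2,3) unfolding S_def by blast
  then obtain m where m: "m \<in> S" and least: "\<And>r. r \<in> S \<Longrightarrow> degree m \<le> degree r"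
    using ex_has_least_nat[of "\<lambda>r. r \<in> S" _ degree] by blast
  have "m dvd r" if "poly (map_poly of_rat r) z = 0" for r
  proof -
    have "poly (map_poly of_rat r) z = poly (map_poly of_rat (r div m)) z * poly (map_poly of_rat m) z
        + poly (map_poly of_rat (r mod m)) z"
      by (metis div_mult_mod_eq map_poly_of_rat_add map_poly_of_rat_mult poly_add poly_mult)
    then have "poly (map_poly of_rat (r mod m)) z = 0" using m that by (simp add: S_def)
    then have "r mod m = 0"
      using least[of "r mod m"] degree_mod_less[of m r] m unfolding S_def by fastforce
    then show ?thesis by (simp add: mod_eq_0_iff_dvd)
  qed
  then have "is_unit m" using assms coprime_common_divisor by blast
  then obtain c where "m = [:c:]" "c \<noteq> 0"
    using m is_unit_iff_degree[of m] unfolding S_def by (auto elim: degree_eq_zeroE)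
  then show False using m unfolding S_def by (simp add: map_poly_pCons)
qed

lemma rm_num_den_no_common_root:
  "rm_valid phi \<Longrightarrow> poly (rm_num phi) z = 0 \<Longrightarrow> poly (rm_den phi) z = 0 \<Longrightarrow> False"
  unfolding rm_valid_def rm_num_def rm_den_def using coprime_no_common_root by blast

lemma rm_den_nonzero: "rm_valid phi \<Longrightarrow> rm_den phi \<noteq> 0"
  unfolding rm_valid_def rm_den_def by (simp add: map_poly_eq_0_iff)

lemma degree_rm_num: "degree (rm_num phi) = degree (fst phi)"
  unfolding rm_num_def by (simp add: degree_map_poly)

lemma degree_rm_den: "degree (rm_den phi) = degree (snd phi)"
  unfolding rm_den_def by (simp add: degree_map_poly)

lemma order_ge_2_iff_pderiv:
  fixes H :: "'a::{idom, semiring_char_0} poly"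
  assumes "H \<noteq> 0" "poly H z = 0"
  shows "2 \<le> order z H \<longleftrightarrow> poly (pderiv H) z = 0"
proof (cases "pderiv H = 0")
  case True
  then obtain c where "H = [:c:]" using pderiv_iszero by blast
  then show ?thesis using assms by auto
next
  case False
  then show ?thesis
    using order_pderiv[OF assms] order_root[of "pderiv H" z] by auto
qed

lemma num_minus_smult_den_nonzero:
  assumes valid: "rm_valid phi" and deg: "rm_deg phi > 0"
  shows "rm_num phi - smult a (rm_den phi) \<noteq> 0"
proof
  assume "rm_num phi - smult a (rm_den phi) = 0"
  then have N: "rm_num phi = smult a (rm_den phi)" by simp
  show False
  proof (cases "degree (rm_den phi) = 0")
    case True
    then have "degree (rm_num phi) = 0" using N by simp
    then show False using deg True by (simp add: rm_deg_def degree_rm_num degree_rm_den)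
  next
    case False
    then obtain w where "poly (rm_den phi) w = 0" using complex_poly_has_root by blast
    then show False using N rm_num_den_no_common_root[OF valid] by simp
  qed
qed

lemma critical_pt_Some_iff:
  assumes valid: "rm_valid phi" and deg: "rm_deg phi > 0"
  shows "critical_pt phi (Some z) \<longleftrightarrow>
    poly (pderiv (rm_num phi) * rm_den phi - rm_num phi * pderiv (rm_den phi)) z = 0"
proof -
  define N where "N = rm_num phi"
  define D where "D = rm_den phi"
  show ?thesis
  proof (cases "poly D z = 0")
    case True
    have "ram_index phi (Some z) = order z D"
      using True by (simp add: ram_index_def rm_eval_def rm_fiber_poly_def D_def)
    moreover have "poly N z \<noteq> 0"
      using rm_num_den_no_common_root[OF valid] True unfolding N_def D_def by blast
    ultimately show ?thesis
      using order_ge_2_iff_pderiv[OF _ True] rm_den_nonzero[OF valid] True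
      unfolding critical_pt_def N_def[symmetric] D_def[symmetric] by simp
  next
    case False
    define a where "a = poly N z / poly D z"
    define H where "H = N - smult a D"
    have "ram_index phi (Some z) = order z H"
      using False by (simp add: ram_index_def rm_eval_def rm_fiber_poly_def H_def a_def N_def D_def)
    moreover have "poly H z = 0" using False by (simp add: H_def a_def)
    moreover have "H \<noteq> 0"
      unfolding H_def N_def D_def by (rule num_minus_smult_den_nonzero[OF valid deg])
    moreover have "poly (pderiv H) z = poly (pderiv N * D - N * pderiv D) z / poly D z"
      using False by (simp add: H_def a_def pderiv_diff pderiv_smult field_simps)
    ultimately show ?thesis
      using order_ge_2_iff_pderiv[of H z] False unfolding critical_pt_def N_def D_def by simp
  qed
qed

lemma degree_le_2_eq_pCons:
  fixes p :: "'a::zero poly"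
  assumes "degree p \<le> 2"
  shows "p = [:coeff p 0, coeff p 1, coeff p 2:]"
proof (rule poly_eqI)
  fix n
  show "coeff p n = coeff [:coeff p 0, coeff p 1, coeff p 2:] n"
  proof (cases "n \<le> 2")
    case True
    then have "n = 0 \<or> n = 1 \<or> n = 2" by auto
    then show ?thesis by (auto simp: numeral_2_eq_2)
  next
    case False
    then show ?thesis
      using assms by (simp add: coeff_eq_0 coeff_pCons split: nat.split)
  qed
qed

lemma coeff_2_nonzero: "degree p = 2 \<Longrightarrow> coeff p 2 \<noteq> 0"
  by (metis leading_coeff_0_iff degree_0 zero_neq_numeral)

lemma rm_num_eq_qpairC:
  assumes "rm_deg phi = 2"
  shows "rm_num phi = [:qf0 (qpairC phi), qf1 (qpairC phi), qf2 (qpairC phi):]"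
proof -
  have "degree (fst phi) \<le> 2" using assms by (simp add: rm_deg_def)
  then show ?thesis unfolding rm_num_def
    by (subst degree_le_2_eq_pCons[of "fst phi"]) (simp_all add: qpair_of_def qpair.map_sel map_poly_pCons)
qed

lemma rm_den_eq_qpairC:
  assumes "rm_deg phi = 2"
  shows "rm_den phi = [:qg0 (qpairC phi), qg1 (qpairC phi), qg2 (qpairC phi):]"
proof -
  have "degree (snd phi) \<le> 2" using assms by (simp add: rm_deg_def)
  then show ?thesis unfolding rm_den_def
    by (subst degree_le_2_eq_pCons[of "snd phi"]) (simp_all add: qpair_of_def qpair.map_sel map_poly_pCons)
qed

lemma poly_rm_num: "rm_deg phi = 2 \<Longrightarrow> poly (rm_num phi) z = qF (qpairC phi) z 1"
  by (simp add: rm_num_eq_qpairC qF_def algebra_simps power2_eq_square)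

lemma poly_rm_den: "rm_deg phi = 2 \<Longrightarrow> poly (rm_den phi) z = qG (qpairC phi) z 1"
  by (simp add: rm_den_eq_qpairC qG_def algebra_simps power2_eq_square)

lemma qg2_eq_0_iff:
  assumes "rm_deg phi = 2"
  shows "qg2 (qpairC phi) = 0 \<longleftrightarrow> degree (fst phi) > degree (snd phi)"
proof -
  have "qg2 (qpairC phi) = 0 \<longleftrightarrow> coeff (snd phi) 2 = 0"
    by (simp add: qpair_of_def qpair.map_sel)
  also have "\<dots> \<longleftrightarrow> degree (snd phi) \<noteq> 2"
    using assms coeff_2_nonzero[of "snd phi"] unfolding rm_deg_def by (auto simp: coeff_eq_0)
  finally show ?thesis using assms unfolding rm_deg_def by auto
qed

lemma qf2_or_qg2_nonzero:
  assumes "rm_deg phi = 2"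
  shows "qf2 (qpairC phi) \<noteq> 0 \<or> qg2 (qpairC phi) \<noteq> 0"
proof -
  have "degree (fst phi) = 2 \<or> degree (snd phi) = 2"
    using assms unfolding rm_deg_def by (metis max_def)
  then show ?thesis
    by (auto simp: qpair_of_def qpair.map_sel dest: coeff_2_nonzero)
qed

lemma rm_eval_eq_qeval:
  assumes "rm_deg phi = 2"
  shows "rm_eval phi = qeval (qpairC phi)"
proof
  fix P
  show "rm_eval phi P = qeval (qpairC phi) P"
  proof (cases P)
    case None
    then show ?thesis
      using assms qg2_eq_0_iff[OF assms]
      by (simp add: rm_eval_def qeval_def proj_pt_def rm_num_eq_qpairC rm_den_eq_qpairC numeral_2_eq_2)
  next
    case (Some z)
    then show ?thesis
      using assms by (simp add: rm_eval_def qeval_def proj_pt_def poly_rm_num poly_rm_den)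
  qed
qed

lemma qvalid_qpairC:
  assumes "rm_valid phi" "rm_deg phi = 2"
  shows "qvalid (qpairC phi)"
  unfolding qvalid_def
proof (intro allI impI)
  fix X Y
  assume zero: "qF (qpairC phi) X Y = 0 \<and> qG (qpairC phi) X Y = 0"
  show "X = 0 \<and> Y = 0"
  proof (cases "Y = 0")
    case True
    then show ?thesis
      using zero qf2_or_qg2_nonzero[OF assms(2)] by (auto simp: qF_def qG_def)
  next
    case False
    have "qF (qpairC phi) X Y = Y^2 * qF (qpairC phi) (X / Y) 1"
      "qG (qpairC phi) X Y = Y^2 * qG (qpairC phi) (X / Y) 1"
      using qF_homogeneous[of _ Y "X / Y" 1] qG_homogeneous[of _ Y "X / Y" 1] False by simp_all
    then have "poly (rm_num phi) (X / Y) = 0" "poly (rm_den phi) (X / Y) = 0"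
      using zero False assms(2) by (simp_all add: poly_rm_num poly_rm_den)
    then show ?thesis using rm_num_den_no_common_root[OF assms(1)] by blast
  qed
qed

lemma critical_pt_None_iff:
  assumes "rm_deg phi = 2"
  shows "critical_pt phi None \<longleftrightarrow> qcrit (qpairC phi) None"
proof (cases "qg2 (qpairC phi) = 0")
  case True
  then have "ram_index phi None = 2 - degree (rm_den phi)"
    using assms qg2_eq_0_iff[OF assms]
    by (simp add: ram_index_def rm_eval_def rm_fiber_poly_def)
  then show ?thesis
    using True qf2_or_qg2_nonzero[OF assms]
    by (auto simp: critical_pt_def qcrit_def rm_den_eq_qpairC[OF assms])
next
  case False
  define a where "a = qf2 (qpairC phi) / qg2 (qpairC phi)"
  have "rm_eval phi None = Some a"
    using False by (simp add: rm_eval_eq_qeval[OF assms] qeval_def proj_pt_def a_def)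
  then have "ram_index phi None = 2 - degree [:qf0 (qpairC phi) - a * qg0 (qpairC phi),
      qf1 (qpairC phi) - a * qg1 (qpairC phi):]"
    using False assms
    by (simp add: ram_index_def rm_fiber_poly_def rm_num_eq_qpairC rm_den_eq_qpairC a_def)
  moreover have "qf1 (qpairC phi) - a * qg1 (qpairC phi) = 0 \<longleftrightarrow>
      qf2 (qpairC phi) * qg1 (qpairC phi) - qf1 (qpairC phi) * qg2 (qpairC phi) = 0"
    using False unfolding a_def by (auto simp: field_simps)
  ultimately show ?thesis by (auto simp: critical_pt_def qcrit_def)
qed

lemma critical_pt_iff_qcrit:
  assumes "rm_valid phi" "rm_deg phi = 2"
  shows "critical_pt phi P \<longleftrightarrow> qcrit (qpairC phi) P"
proof (cases P)
  case None
  then show ?thesis using critical_pt_None_iff[OF assms(2)] by simp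
next
  case (Some z)
  have W: "poly (pderiv (rm_num phi) * rm_den phi - rm_num phi * pderiv (rm_den phi)) z
      = qW (qpairC phi) z 1"
    using assms(2) by (simp add: rm_num_eq_qpairC rm_den_eq_qpairC pderiv_pCons qW_def
        algebra_simps numeral_2_eq_2)
  then show ?thesis
    using Some critical_pt_Some_iff[OF assms(1), of z] assms(2) unfolding W by (simp add: qcrit_def)
qed

section \<open>Critical two-cycles\<close>

lemma normal_form_qcrit:
  assumes "f0 \<noteq> 0" "g2 \<noteq> 0" "y \<noteq> 0" "qcrit (QPair 0 f1 f0 g2 0 0) (Some y)"
  shows "f1 * y = - 2 * f0"
proof -
  have "qW (QPair 0 f1 f0 g2 0 0) y 1 = - (y * g2 * (f1 * y + 2 * f0))"
    by (simp add: qW_def algebra_simps power2_eq_square)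
  then have "f1 * y + 2 * f0 = 0" using assms by (simp add: qcrit_def)
  then show ?thesis by (simp add: add_eq_0_iff)
qed

lemma normal_form_free_critical_not_two_periodic:
  assumes f0: "f0 \<noteq> 0" and g2: "g2 \<noteq> 0" and y: "y \<noteq> 0" and crit: "f1 * y = - 2 * f0"
  shows "\<not> qtwo_periodic (QPair 0 f1 f0 g2 0 0) (Some y)"
proof
  let ?psi = "QPair 0 f1 f0 g2 0 0"
  assume per: "qtwo_periodic ?psi (Some y)"
  define w where "w = - f0 / (g2 * y^2)"
  have w: "w \<noteq> 0" "g2 * y^2 * w = - f0" using f0 g2 y by (simp_all add: w_def)
  have "qeval ?psi (Some y) = Some w"
    using g2 y crit by (simp add: qeval_def proj_pt_def qF_def qG_def w_def power2_eq_square algebra_simps)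
  moreover have "qeval ?psi (Some w) = Some ((f1 * w + f0) / (g2 * w^2))"
    using g2 w by (simp add: qeval_def proj_pt_def qF_def qG_def)
  ultimately have returns: "f1 * w + f0 = y * g2 * w^2" and "w \<noteq> y"
    using per g2 w by (auto simp: qtwo_periodic_def field_simps)
  have "f0 * (y - w) = y * (f1 * w + f0) - (f1 * y + 2 * f0) * w + f0 * w"
    by (simp add: algebra_simps)
  also have "\<dots> = w * (g2 * y^2 * w + f0)"
    using returns crit by (simp add: algebra_simps power2_eq_square)
  finally show False using w f0 \<open>w \<noteq> y\<close> by simp
qed

text \<open>Conjugating by \<open>\<sigma> = [[U, X0], [V, Y0]]\<close>, which sends \<open>0\<close> to \<open>[X0 : Y0]\<close> and \<open>\<infinity>\<close>
  to \<open>[U : V]\<close>, moves a 2-cycle to \<open>{0, \<infinity>}\<close>.\<close>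
locale two_cycle =
  fixes h :: "complex qpair" and X0 Y0 U V :: complex
  assumes valid: "qvalid h"
    and nonzero: "(X0, Y0) \<noteq> (0, 0)" "(U, V) \<noteq> (0, 0)"
    and maps_to: "qeval h (proj_pt X0 Y0) = proj_pt U V"
    and maps_back: "qeval h (proj_pt U V) = proj_pt X0 Y0"
    and distinct: "proj_pt U V \<noteq> proj_pt X0 Y0"
begin

definition normal_form :: "complex qpair" where
  "normal_form = qconj U X0 V Y0 h"

lemma det_nonzero: "U * Y0 - X0 * V \<noteq> 0"
  using distinct proj_pt_eq_iff[OF nonzero(2,1)] by auto

lemma mob_zero: "mob (U, X0, V, Y0) (Some 0) = proj_pt X0 Y0"
  using mob_proj_pt[OF det_nonzero, of 0 1] by (simp add: proj_pt_Some)

lemma mob_infinity: "mob (U, X0, V, Y0) None = proj_pt U V"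
  using mob_proj_pt[OF det_nonzero, of 1 0] by (simp add: proj_pt_infinity)

lemma normal_form_shape:
  "qf2 normal_form = 0" "qg0 normal_form = 0" "qf0 normal_form \<noteq> 0" "qg2 normal_form \<noteq> 0"
proof -
  have to: "qF h X0 Y0 * V = U * qG h X0 Y0"
    using maps_to qeval_proj_pt[OF valid nonzero(1)] proj_pt_eq_iff[OF qvalidD[OF valid nonzero(1)] nonzero(2)]
    by simp
  have returns: "qF h U V * Y0 = X0 * qG h U V"
    using maps_back qeval_proj_pt[OF valid nonzero(2)] proj_pt_eq_iff[OF qvalidD[OF valid nonzero(2)] nonzero(1)]
    by simp
  have "qg0 normal_form = qG normal_form 0 1" by (simp add: qG_def)
  also have "\<dots> = 0" using to by (simp add: normal_form_def qG_qconj algebra_simps)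
  finally show g0: "qg0 normal_form = 0" .
  have "qf2 normal_form = qF normal_form 1 0" by (simp add: qF_def)
  also have "\<dots> = 0" using returns by (simp add: normal_form_def qF_qconj algebra_simps)
  finally show f2: "qf2 normal_form = 0" .
  have valid_nf: "qvalid normal_form"
    unfolding normal_form_def using qvalid_qconj[OF valid det_nonzero] .
  show "qf0 normal_form \<noteq> 0"
    using qvalidD[OF valid_nf, of 0 1] g0 by (simp add: qF_def qG_def)
  show "qg2 normal_form \<noteq> 0"
    using qvalidD[OF valid_nf, of 1 0] f2 by (simp add: qF_def qG_def)
qed

lemma first_critical: "qcrit h (proj_pt X0 Y0) \<Longrightarrow> qg1 normal_form = 0"
  using qcrit_qconj[OF det_nonzero, of h "Some 0"] normal_form_shape
  by (simp add: mob_zero normal_form_def[symmetric] qcrit_def qW_def)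

lemma second_critical: "qcrit h (proj_pt U V) \<Longrightarrow> qf1 normal_form = 0"
  using qcrit_qconj[OF det_nonzero, of h None] normal_form_shape
  by (simp add: mob_infinity normal_form_def[symmetric] qcrit_def)

lemma critical_cycle_normal_form:
  assumes "qcrit h (proj_pt X0 Y0)" "qcrit h (proj_pt U V)"
  shows "normal_form = QPair 0 0 (qf0 normal_form) (qg2 normal_form) 0 0"
  using normal_form_shape first_critical[OF assms(1)] second_critical[OF assms(2)]
  by (metis qpair.collapse)

lemma critical_cycle_unique:
  assumes crit: "qcrit h (proj_pt X0 Y0)"
    and c: "qcrit h c" "qtwo_periodic h c" "c \<noteq> proj_pt X0 Y0"
  shows "c = proj_pt U V"
proof -
  define f1 f0 g2 where "f1 = qf1 normal_form" and "f0 = qf0 normal_form" and "g2 = qg2 normal_form"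
  have nf: "normal_form = QPair 0 f1 f0 g2 0 0"
    using normal_form_shape first_critical[OF crit] unfolding f1_def f0_def g2_def
    by (metis qpair.collapse)
  have f0: "f0 \<noteq> 0" and g2: "g2 \<noteq> 0" using normal_form_shape by (simp_all add: f0_def g2_def)
  define e where "e = mob (Y0, -X0, -V, U) c"
  have c_e: "c = mob (U, X0, V, Y0) e" unfolding e_def using mob_mob_adj[OF det_nonzero] by simp
  have e: "qcrit normal_form e" "qtwo_periodic normal_form e"
    using c qcrit_qconj[OF det_nonzero] qtwo_periodic_qconj[OF valid det_nonzero]
    unfolding c_e normal_form_def by simp_all
  show ?thesis
  proof (cases e)
    case None
    then show ?thesis using c_e mob_infinity by simp
  next
    case (Some y)
    have "y \<noteq> 0" using c(3) c_e Some mob_zero by auto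
    then show ?thesis
      using e Some nf normal_form_qcrit[OF f0 g2] normal_form_free_critical_not_two_periodic[OF f0 g2]
      by metis
  qed
qed

end

lemma qtwo_periodic_proj_pt:
  assumes valid: "qvalid h" and XY: "(X, Y) \<noteq> (0, 0)"
  shows "qtwo_periodic h (proj_pt X Y) \<longleftrightarrow>
    proj_pt (qF h (qF h X Y) (qG h X Y)) (qG h (qF h X Y) (qG h X Y)) = proj_pt X Y
    \<and> proj_pt (qF h X Y) (qG h X Y) \<noteq> proj_pt X Y"
  unfolding qtwo_periodic_def qeval_proj_pt[OF valid XY] qeval_proj_pt[OF valid qvalidD[OF valid XY]] ..

lemma two_cycle_of_qtwo_periodic:
  assumes valid: "qvalid h" and XY: "(X0, Y0) \<noteq> (0, 0)" and per: "qtwo_periodic h (proj_pt X0 Y0)"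
  shows "two_cycle h X0 Y0 (qF h X0 Y0) (qG h X0 Y0)"
  using assms qvalidD[OF valid XY] qtwo_periodic_proj_pt[OF valid XY] qeval_proj_pt[OF valid XY]
  by unfold_locales (simp_all add: qtwo_periodic_def)

lemma critical_two_cycle_unique:
  assumes valid: "qvalid h" and P: "qcrit h P" "qtwo_periodic h P"
    and c: "qcrit h c" "qtwo_periodic h c" "c \<noteq> P"
  shows "qeval h P = c"
proof -
  obtain X0 Y0 where XY: "(X0, Y0) \<noteq> (0, 0)" "P = proj_pt X0 Y0" by (rule proj_pt_cases)
  interpret two_cycle h X0 Y0 "qF h X0 Y0" "qG h X0 Y0"
    using two_cycle_of_qtwo_periodic[OF valid XY(1)] P(2) XY(2) by simp
  show ?thesis using critical_cycle_unique P(1) c XY(2) maps_to by simp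
qed

section \<open>An automorphism of order three\<close>

lemma cube_root_of_unity_exists: "\<exists>\<omega> :: complex. \<omega>^2 + \<omega> + 1 = 0"
  using complex_poly_has_root[of "[:1, 1, 1:]"] by (auto simp: algebra_simps power2_eq_square)

lemma cube_root_of_unity:
  assumes "\<omega>^2 + \<omega> + 1 = (0::complex)"
  shows "\<omega>^3 = 1" "\<omega> \<noteq> 0" "\<omega> \<noteq> 1"
proof -
  have "\<omega>^3 - 1 = (\<omega> - 1) * (\<omega>^2 + \<omega> + 1)"
    by (simp add: algebra_simps power2_eq_square power3_eq_cube)
  then show "\<omega>^3 = 1" using assms by simp
  show "\<omega> \<noteq> 0" "\<omega> \<noteq> 1" using assms by auto
qed

text \<open>The matrix \<open>\<sigma> diag(\<omega>, 1) adj(\<sigma>)\<close> of \<open>\<sigma> \<circ> (x \<mapsto> \<omega> x) \<circ> \<sigma>\<inverse>\<close> for \<open>\<sigma> = [[a, b], [c, d]]\<close>.\<close>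
definition rot_conj :: "complex \<Rightarrow> complex \<Rightarrow> complex \<Rightarrow> complex \<Rightarrow> complex
    \<Rightarrow> complex \<times> complex \<times> complex \<times> complex" where
  "rot_conj a b c d \<omega> = (a * d * \<omega> - b * c, a * b * (1 - \<omega>), c * d * (\<omega> - 1), a * d - b * c * \<omega>)"

lemma mob_rot_conj:
  assumes det: "a * d - b * c \<noteq> 0" and "\<omega> \<noteq> 0"
  shows "mob (rot_conj a b c d \<omega>) x = mob (a, b, c, d) (mob (\<omega>, 0, 0, 1) (mob (d, -b, -c, a) x))"
proof -
  have "d * a - (-b) * (-c) \<noteq> 0" "\<omega> * 1 - 0 * 0 \<noteq> 0"
    "(\<omega> * d) * a - (\<omega> * (-b)) * (-c) \<noteq> 0"
    using assms by (simp_all add: algebra_simps)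
  then show ?thesis
    using mob_mob[OF det, where a' = "\<omega> * d" and b' = "\<omega> * (-b)" and c' = "-c" and d' = a]
      mob_mob[where a = \<omega> and b = 0 and c = 0 and d = 1 and a' = d and b' = "-b" and c' = "-c" and d' = a]
    by (simp add: rot_conj_def algebra_simps)
qed

lemma mob_nondeg_rot_conj:
  assumes "a * d - b * c \<noteq> 0" "\<omega> \<noteq> 0"
  shows "mob_nondeg (rot_conj a b c d \<omega>)"
proof -
  have eq: "(a * d * \<omega> - b * c) * (a * d - b * c * \<omega>) - (a * b * (1 - \<omega>)) * (c * d * (\<omega> - 1))
      = \<omega> * (a * d - b * c)^2"
    by (simp add: algebra_simps power2_eq_square)
  have "\<omega> * (a * d - b * c)^2 \<noteq> 0" using assms by simp
  then show ?thesis unfolding mob_nondeg_def rot_conj_def prod.case eq .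
qed

lemma qeval_rotation:
  assumes "\<omega>^3 = 1"
  shows "qeval (QPair 0 0 f0 g2 0 0) (mob (\<omega>, 0, 0, 1) x)
    = mob (\<omega>, 0, 0, 1) (qeval (QPair 0 0 f0 g2 0 0) x)"
proof (cases x)
  case None
  then show ?thesis by (simp add: qeval_def mob_def proj_pt_def)
next
  case (Some z)
  have "\<omega> \<noteq> 0" using assms by auto
  moreover have "inverse (\<omega>^2) = \<omega>"
    using assms by (intro inverse_unique) (simp add: power2_eq_square power3_eq_cube)
  then have "f0 / (g2 * (\<omega> * z)^2) = \<omega> * f0 / (g2 * z^2)"
    by (simp add: power_mult_distrib divide_inverse mult_ac)
  ultimately show ?thesis using Some by (simp add: qeval_def mob_def proj_pt_def qF_def qG_def)
qed

lemma rotation_conj_commutes: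
  assumes valid: "qvalid h" and det: "a * d - b * c \<noteq> 0"
    and nf: "qconj a b c d h = QPair 0 0 f0 g2 0 0" and \<omega>: "\<omega>^2 + \<omega> + 1 = 0"
  shows "qeval h (mob (rot_conj a b c d \<omega>) x) = mob (rot_conj a b c d \<omega>) (qeval h x)"
proof -
  let ?S = "mob (a, b, c, d)" and ?S' = "mob (d, -b, -c, a)" and ?T = "mob (\<omega>, 0, 0, 1)"
  let ?g = "qeval (QPair 0 0 f0 g2 0 0)"
  have S: "qeval h (?S y) = ?S (?g y)" for y
    using qeval_qconj[OF valid det] nf by simp
  have T: "?g (?T y) = ?T (?g y)" for y
    using qeval_rotation[OF cube_root_of_unity(1)[OF \<omega>]] .
  have "qeval h x = ?S (?g (?S' x))"
    using S[of "?S' x"] mob_mob_adj[OF det] by simp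
  then have "?S' (qeval h x) = ?g (?S' x)"
    using mob_adj_mob[OF det] by simp
  then show ?thesis
    using S T mob_rot_conj[OF det cube_root_of_unity(2)[OF \<omega>]] by simp
qed

lemma rot_conj_nontrivial:
  assumes det: "a * d - b * c \<noteq> 0" and \<omega>: "\<omega>^2 + \<omega> + 1 = 0"
  shows "mob (rot_conj a b c d \<omega>) (mob (a, b, c, d) (Some 1)) \<noteq> mob (a, b, c, d) (Some 1)"
proof
  assume "mob (rot_conj a b c d \<omega>) (mob (a, b, c, d) (Some 1)) = mob (a, b, c, d) (Some 1)"
  then have "mob (a, b, c, d) (mob (\<omega>, 0, 0, 1) (Some 1)) = mob (a, b, c, d) (Some 1)"
    by (simp add: mob_rot_conj[OF det cube_root_of_unity(2)[OF \<omega>]] mob_adj_mob[OF det])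
  then have "mob (\<omega>, 0, 0, 1) (Some 1) = Some 1"
    by (metis mob_adj_mob[OF det])
  then show False
    using cube_root_of_unity(3)[OF \<omega>] by (simp add: mob_def)
qed

lemma not_Aut_trivial_if_conj_inverse_square:
  assumes "rm_valid phi" "rm_deg phi = 2" and det: "a * d - b * c \<noteq> 0"
    and nf: "qconj a b c d (qpairC phi) = QPair 0 0 f0 g2 0 0" and \<omega>: "\<omega>^2 + \<omega> + 1 = 0"
    and alg: "mob_alg (rot_conj a b c d \<omega>)"
  shows "\<not> Aut_trivial phi"
proof -
  have "in_Aut phi (rot_conj a b c d \<omega>)"
    using rotation_conj_commutes[OF qvalid_qpairC[OF assms(1,2)] det nf \<omega>] alg
      mob_nondeg_rot_conj[OF det cube_root_of_unity(2)[OF \<omega>]]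
    by (simp add: in_Aut_def rm_eval_eq_qeval[OF assms(2)])
  then show ?thesis
    using rot_conj_nontrivial[OF det \<omega>] unfolding Aut_trivial_def by blast
qed

section \<open>Galois conjugation in a quadratic field\<close>

lemma quadratic_conjugate_exists:
  assumes rat: "a \<in> \<rat>" "b \<in> \<rat>" "c \<in> \<rat>" and nonzero: "(a, b, c) \<noteq> (0, 0, 0)"
    and root: "a * z^2 + b * z + c = 0" and irrational: "z \<notin> \<rat>"
  obtains z' where "z' \<noteq> z" "z + z' \<in> \<rat>" "z * z' \<in> \<rat>"
proof -
  have a: "a \<noteq> 0"
  proof
    assume "a = 0"
    then have "b * z = - c" using root by (simp add: eq_neg_iff_add_eq_0)
    show False
    proof (cases "b = 0")
      case True
      then show False using nonzero \<open>a = 0\<close> \<open>b * z = - c\<close> by simp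
    next
      case False
      then have "z = - c / b" using \<open>b * z = - c\<close> by (simp add: field_simps)
      then show False using irrational rat by simp
    qed
  qed
  define z' where "z' = - b / a - z"
  have "a * (z * z') = - (a * z^2 + b * z)"
    using a unfolding z'_def by (simp add: field_simps power2_eq_square)
  also have "a * z^2 + b * z = - c"
    using root by (simp add: eq_neg_iff_add_eq_0)
  finally have "z * z' = c / a"
    using a by (simp add: field_simps)
  moreover have "z' \<noteq> z"
  proof
    assume "z' = z"
    then have "z = - b / (2 * a)" using a unfolding z'_def by (simp add: field_simps)
    then show False using irrational rat by simp
  qed
  moreover have "z + z' \<in> \<rat>" using rat by (simp add: z'_def)
  ultimately show ?thesis using that rat by (metis Rats_divide)
qed

text \<open>For a quadratic irrationality \<open>z\<close> with conjugate \<open>z'\<close>, \<open>conjugates u u'\<close> says that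
  \<open>u \<in> \<rat>(z)\<close> and \<open>u'\<close> is its Galois conjugate.\<close>
locale galois_pair =
  fixes z z' :: complex
  assumes sum_rat: "z + z' \<in> \<rat>" and prod_rat: "z * z' \<in> \<rat>"
begin

definition conjugates :: "complex \<Rightarrow> complex \<Rightarrow> bool" where
  "conjugates u u' \<longleftrightarrow> (\<exists>\<alpha> \<beta>. \<alpha> \<in> \<rat> \<and> \<beta> \<in> \<rat> \<and> u = \<alpha> + \<beta> * z \<and> u' = \<alpha> + \<beta> * z')"

lemma conjugates_rat: "r \<in> \<rat> \<Longrightarrow> conjugates r r"
  unfolding conjugates_def by (rule exI[of _ r], rule exI[of _ 0]) simp

lemma conjugates_generator: "conjugates z z'"
  unfolding conjugates_def by (rule exI[of _ 0], rule exI[of _ 1]) simp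

lemma conjugates_generator_swap: "conjugates z' z"
  unfolding conjugates_def using sum_rat
  by (intro exI[of _ "z + z'"] exI[of _ "-1"]) simp

lemma conjugates_add: "conjugates u u' \<Longrightarrow> conjugates v v' \<Longrightarrow> conjugates (u + v) (u' + v')"
  unfolding conjugates_def
  by (elim exE conjE, rename_tac a b c d, rule_tac x = "a + c" in exI, rule_tac x = "b + d" in exI)
     (auto simp: algebra_simps)

lemma conjugates_uminus: "conjugates u u' \<Longrightarrow> conjugates (- u) (- u')"
  unfolding conjugates_def
  by (elim exE conjE, rename_tac a b, rule_tac x = "- a" in exI, rule_tac x = "- b" in exI) auto

lemma conjugates_diff: "conjugates u u' \<Longrightarrow> conjugates v v' \<Longrightarrow> conjugates (u - v) (u' - v')"
  using conjugates_add[of u u' "- v" "- v'"] conjugates_uminus[of v v'] by simp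

text \<open>Multiplication reduces \<open>z\<^sup>2 = (z + z') z - z z'\<close>, and likewise for \<open>z'\<close>.\<close>
lemma conjugates_mult: "conjugates u u' \<Longrightarrow> conjugates v v' \<Longrightarrow> conjugates (u * v) (u' * v')"
proof -
  assume "conjugates u u'" "conjugates v v'"
  then obtain a b c d where abcd: "a \<in> \<rat>" "b \<in> \<rat>" "c \<in> \<rat>" "d \<in> \<rat>"
    "u = a + b * z" "u' = a + b * z'" "v = c + d * z" "v' = c + d * z'"
    unfolding conjugates_def by blast
  define s t where "s = z + z'" and "t = z * z'"
  have z2: "z * z = s * z - t" "z' * z' = s * z' - t" by (simp_all add: s_def t_def algebra_simps)
  have "u * v = a * c + (a * d + b * c) * z + b * d * (z * z)"
    "u' * v' = a * c + (a * d + b * c) * z' + b * d * (z' * z')"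
    unfolding abcd by (simp_all add: algebra_simps)
  then have "u * v = (a * c - b * d * t) + (a * d + b * c + b * d * s) * z"
    "u' * v' = (a * c - b * d * t) + (a * d + b * c + b * d * s) * z'"
    unfolding z2 by (simp_all add: algebra_simps)
  moreover have "a * c - b * d * t \<in> \<rat>" "a * d + b * c + b * d * s \<in> \<rat>"
    using abcd sum_rat prod_rat by (simp_all add: s_def t_def)
  ultimately show ?thesis unfolding conjugates_def by blast
qed

lemma conjugates_sum_rat: "conjugates u u' \<Longrightarrow> u + u' \<in> \<rat>"
proof -
  assume "conjugates u u'"
  then obtain a b where ab: "a \<in> \<rat>" "b \<in> \<rat>" "u = a + b * z" "u' = a + b * z'"
    unfolding conjugates_def by blast
  have "u + u' = 2 * a + b * (z + z')" unfolding ab by (simp add: algebra_simps)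
  then show ?thesis using ab sum_rat by simp
qed

lemma conjugates_prod_rat: "conjugates u u' \<Longrightarrow> u * u' \<in> \<rat>"
proof -
  assume "conjugates u u'"
  then obtain a b where ab: "a \<in> \<rat>" "b \<in> \<rat>" "u = a + b * z" "u' = a + b * z'"
    unfolding conjugates_def by blast
  have "u * u' = a * a + a * b * (z + z') + b * b * (z * z')" unfolding ab by (simp add: algebra_simps)
  then show ?thesis using ab sum_rat prod_rat by simp
qed

lemma conjugates_eq_0_iff:
  assumes "z \<notin> \<rat>" "conjugates u u'"
  shows "u = 0 \<longleftrightarrow> u' = 0"
proof -
  obtain a b where ab: "a \<in> \<rat>" "b \<in> \<rat>" "u = a + b * z" "u' = a + b * z'"
    using assms(2) unfolding conjugates_def by blast
  have "z' = (z + z') - z" by simp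
  then have "z' \<notin> \<rat>" using assms(1) sum_rat by (metis Rats_diff diff_diff_eq2 diff_add_cancel)
  have "a + b * w = 0 \<longleftrightarrow> a = 0 \<and> b = 0" if "w \<notin> \<rat>" for w
  proof
    assume "a + b * w = 0"
    then have "b \<noteq> 0 \<Longrightarrow> w = - a / b" by (simp add: field_simps add_eq_0_iff)
    then show "a = 0 \<and> b = 0" using that ab \<open>a + b * w = 0\<close> by (cases "b = 0") auto
  qed simp
  then show ?thesis using assms(1) \<open>z' \<notin> \<rat>\<close> ab by simp
qed

text \<open>\<open>w\<close> is a root of \<open>(x\<^sup>2 - A x + B)(x\<^sup>2 - A' x + B')\<close>, whose coefficients are rational.\<close>
lemma algebraic_root_conjugate_quadratic:
  assumes "conjugates A A'" "conjugates B B'" and root: "w^2 - A * w + B = 0"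
  shows "algebraic w"
proof (rule algebraicI')
  let ?p = "Poly [B * B', - (A * B' + A' * B), A * A' + B + B', - (A + A'), 1]"
  have "A * B' + A' * B = (A + A') * (B + B') - (A * B + A' * B')"
    by (simp add: algebra_simps)
  then have "A * B' + A' * B \<in> \<rat>"
    using assms conjugates_sum_rat conjugates_mult by simp
  moreover have "A + A' \<in> \<rat>" "B + B' \<in> \<rat>" "A * A' \<in> \<rat>" "B * B' \<in> \<rat>"
    using assms conjugates_sum_rat conjugates_prod_rat by simp_all
  moreover have "- (A * B' + A' * B) \<in> \<rat>" "- (A + A') \<in> \<rat>"
    using calculation by (simp_all only: Rats_minus_iff)
  ultimately have "set [B * B', - (A * B' + A' * B), A * A' + B + B', - (A + A'), 1] \<subseteq> \<rat>"
    by (simp add: add.assoc)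
  then show "coeff ?p i \<in> \<rat>" for i
    unfolding coeff_Poly_eq nth_default_def by (metis Rats_0 nth_mem subsetD)
  have "coeff ?p 4 = 1" by (simp add: numeral_eq_Suc)
  then show "?p \<noteq> 0" by auto
  have "poly ?p w = (w^2 - A * w + B) * (w^2 - A' * w + B')"
    by (simp add: algebra_simps power2_eq_square power3_eq_cube numeral_eq_Suc)
  then show "poly ?p w = 0" using root by simp
qed

lemma algebraic_plus_omega:
  assumes u: "conjugates u u'" and v: "conjugates v v'" and \<omega>: "\<omega>^2 + \<omega> + 1 = 0"
  shows "algebraic (u + \<omega> * v)"
proof (rule algebraic_root_conjugate_quadratic)
  have two: "conjugates 2 2" by (rule conjugates_rat) simp
  show "conjugates (2 * u - v) (2 * u' - v')"
    by (intro conjugates_diff conjugates_mult two u v)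
  show "conjugates (u * u - u * v + v * v) (u' * u' - u' * v' + v' * v')"
    by (intro conjugates_add conjugates_diff conjugates_mult u v)
  have "(u + \<omega> * v)^2 - (2 * u - v) * (u + \<omega> * v) + (u * u - u * v + v * v) = v * v * (\<omega>^2 + \<omega> + 1)"
    by (simp add: algebra_simps power2_eq_square)
  then show "(u + \<omega> * v)^2 - (2 * u - v) * (u + \<omega> * v) + (u * u - u * v + v * v) = 0"
    using \<omega> by simp
qed

lemma mob_alg_rot_conj:
  assumes "conjugates (a * d) ad'" "conjugates (b * c) bc'" "conjugates (a * b) ab'"
    "conjugates (c * d) cd'" and \<omega>: "\<omega>^2 + \<omega> + 1 = 0"
  shows "mob_alg (rot_conj a b c d \<omega>)"
proof -
  have rot: "a * d * \<omega> - b * c = - (b * c) + \<omega> * (a * d)"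
    "a * b * (1 - \<omega>) = a * b + \<omega> * (- (a * b))" "c * d * (\<omega> - 1) = - (c * d) + \<omega> * (c * d)"
    "a * d - b * c * \<omega> = a * d + \<omega> * (- (b * c))"
    by (simp_all add: algebra_simps)
  show ?thesis
    unfolding mob_alg_def rot_conj_def prod.case rot
    using assms(1-4) by (blast intro: algebraic_plus_omega[OF _ _ \<omega>] conjugates_uminus)
qed

lemma conjugates_qF_qG_qW:
  assumes "conjugates X X'" "conjugates Y Y'"
  shows "conjugates (qF (map_qpair of_rat H) X Y) (qF (map_qpair of_rat H) X' Y')"
    "conjugates (qG (map_qpair of_rat H) X Y) (qG (map_qpair of_rat H) X' Y')"
    "conjugates (qW (map_qpair of_rat H) X Y) (qW (map_qpair of_rat H) X' Y')"
  using assms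
  by (simp_all add: qF_def qG_def qW_def power2_eq_square qpair.map_sel
      conjugates_add conjugates_diff conjugates_mult conjugates_rat)

lemma proj_pt_eq_conjugates:
  assumes "z \<notin> \<rat>" and conj: "conjugates A A'" "conjugates B B'" "conjugates X X'" "conjugates Y Y'"
    and "(A, B) \<noteq> (0, 0)" "(X, Y) \<noteq> (0, 0)" "(A', B') \<noteq> (0, 0)" "(X', Y') \<noteq> (0, 0)"
  shows "proj_pt A B = proj_pt X Y \<longleftrightarrow> proj_pt A' B' = proj_pt X' Y'"
proof -
  have "conjugates (A * Y - X * B) (A' * Y' - X' * B')"
    by (intro conjugates_diff conjugates_mult conj)
  then have "A * Y - X * B = 0 \<longleftrightarrow> A' * Y' - X' * B' = 0"
    by (rule conjugates_eq_0_iff[OF assms(1)])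
  then show ?thesis using assms(6-9) by (simp add: proj_pt_eq_iff)
qed

lemma conjugate_critical_two_periodic:
  fixes H :: "rat qpair"
  defines "h \<equiv> map_qpair of_rat H"
  assumes irrational: "z \<notin> \<rat>" and valid: "qvalid h"
    and crit: "qcrit h (Some z)" and per: "qtwo_periodic h (Some z)"
  shows "qcrit h (Some z')" "qtwo_periodic h (Some z')"
proof -
  have zz: "conjugates z z'" and one: "conjugates 1 1"
    by (simp_all add: conjugates_generator conjugates_rat)
  note forms = conjugates_qF_qG_qW[where H = H, folded h_def]
  show "qcrit h (Some z')"
    using crit conjugates_eq_0_iff[OF irrational forms(3)[OF zz one]] by (simp add: qcrit_def)
  let ?U = "qF h z 1" and ?V = "qG h z 1" and ?U' = "qF h z' 1" and ?V' = "qG h z' 1"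
  have UV: "conjugates ?U ?U'" "conjugates ?V ?V'" using forms(1,2)[OF zz one] .
  have "(z, 1::complex) \<noteq> (0, 0)" "(z', 1::complex) \<noteq> (0, 0)" by simp_all
  then have nonzero: "(z, 1::complex) \<noteq> (0, 0)" "(z', 1::complex) \<noteq> (0, 0)"
      "(?U, ?V) \<noteq> (0, 0)" "(?U', ?V') \<noteq> (0, 0)"
    using qvalidD[OF valid] by blast+
  show "qtwo_periodic h (Some z')"
    using per qtwo_periodic_proj_pt[OF valid nonzero(1)] qtwo_periodic_proj_pt[OF valid nonzero(2)]
      proj_pt_eq_conjugates[OF irrational forms(1,2)[OF UV] zz one qvalidD[OF valid nonzero(3)] nonzero(1)
        qvalidD[OF valid nonzero(4)] nonzero(2)]
      proj_pt_eq_conjugates[OF irrational UV zz one nonzero(3,1,4,2)]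
    by (simp add: proj_pt_Some)
qed

end

section \<open>Rational and irrational critical cycles\<close>

lemma irrational_critical_cycle_not_Aut_trivial:
  assumes phi_valid: "rm_valid phi" and deg: "rm_deg phi = 2" and irrational: "z \<notin> \<rat>"
    and crit: "qcrit (qpairC phi) (Some z)" and per: "qtwo_periodic (qpairC phi) (Some z)"
  shows "\<not> Aut_trivial phi"
proof -
  let ?h = "qpairC phi"
  have hvalid: "qvalid ?h" using qvalid_qpairC[OF phi_valid deg] .
  let ?W2 = "qf2 ?h * qg1 ?h - qf1 ?h * qg2 ?h" and ?W1 = "qf2 ?h * qg0 ?h - qf0 ?h * qg2 ?h"
    and ?W0 = "qf1 ?h * qg0 ?h - qf0 ?h * qg1 ?h"
  have rat: "?W2 \<in> \<rat>" "2 * ?W1 \<in> \<rat>" "?W0 \<in> \<rat>" by (simp_all add: qpair.map_sel)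
  have nonzero: "(?W2, 2 * ?W1, ?W0) \<noteq> (0, 0, 0)" using qvalid_qW_nonzero[OF hvalid] by auto
  have root: "?W2 * z^2 + 2 * ?W1 * z + ?W0 = 0" using crit by (simp add: qcrit_def qW_def)
  obtain z' where z': "z' \<noteq> z" "z + z' \<in> \<rat>" "z * z' \<in> \<rat>"
    using quadratic_conjugate_exists[OF rat nonzero root irrational] .
  interpret galois_pair z z' using z' by unfold_locales
  have crit': "qcrit ?h (Some z')" and per': "qtwo_periodic ?h (Some z')"
    using conjugate_critical_two_periodic[OF irrational hvalid crit per] by simp_all
  have maps_to: "qeval ?h (Some z) = Some z'"
    using critical_two_cycle_unique[OF hvalid crit per crit' per'] z'(1) by simp
  interpret two_cycle ?h z 1 z' 1
    using hvalid maps_to per z'(1) by unfold_locales (simp_all add: proj_pt_Some qtwo_periodic_def)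
  obtain \<omega> :: complex where \<omega>: "\<omega>^2 + \<omega> + 1 = 0" using cube_root_of_unity_exists by blast
  have "mob_alg (rot_conj z' z 1 1 \<omega>)"
    using mob_alg_rot_conj[where ad' = z and bc' = z' and ab' = "z * z'" and cd' = 1, OF _ _ _ _ \<omega>] z'(3)
    by (simp add: conjugates_generator conjugates_generator_swap conjugates_rat mult.commute)
  then show ?thesis
    using not_Aut_trivial_if_conj_inverse_square[OF phi_valid deg det_nonzero _ \<omega>]
      critical_cycle_normal_form crit crit' unfolding normal_form_def by (simp add: proj_pt_Some)
qed

lemma qpair_of_phi_v: "qpair_of (phi_v v) = QPair 0 v (- v) 1 0 0"
  by (simp add: qpair_of_def phi_v_def numeral_2_eq_2)

lemma rm_deg_phi_v: "v \<noteq> 0 \<Longrightarrow> rm_deg (phi_v v) = 2"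
  by (simp add: rm_deg_def phi_v_def)

lemma normal_form_rescale:
  fixes f1 f0 g2 :: "'a::field"
  assumes "f1 \<noteq> 0" "f0 \<noteq> 0" "g2 \<noteq> 0"
  obtains l k w where "l \<noteq> 0" "k \<noteq> 0" "w \<noteq> 0"
    "qconj l 0 0 1 (QPair 0 f1 f0 g2 0 0) = qscale k (QPair 0 w (- w) 1 0 0)"
proof
  define l where "l = - f0 / f1"
  define k where "k = l^3 * g2"
  define w where "w = f1 * l / k"
  show "l \<noteq> 0" "k \<noteq> 0" "w \<noteq> 0"
    using assms by (simp_all add: l_def k_def w_def)
  have "qconj l 0 0 1 (QPair 0 f1 f0 g2 0 0) = QPair 0 (f1 * l) f0 k 0 0"
    by (simp add: qconj_def Let_def k_def power2_eq_square power3_eq_cube)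
  also have "\<dots> = qscale k (QPair 0 w (- w) 1 0 0)"
    using assms \<open>k \<noteq> 0\<close> by (simp add: qscale_def w_def l_def)
  finally show "qconj l 0 0 1 (QPair 0 f1 f0 g2 0 0) = qscale k (QPair 0 w (- w) 1 0 0)" .
qed

lemma lin_conj_Q_of_qconj:
  assumes valid: "rm_valid phi" and deg: "rm_deg phi = 2" "rm_deg psi = 2"
    and det: "a * d - b * c \<noteq> 0" and k: "k \<noteq> 0"
    and conj: "qconj a b c d (qpair_of phi) = qscale k (qpair_of psi)"
  shows "lin_conj_Q phi psi"
proof -
  let ?s = "(of_rat a, of_rat b, of_rat c, of_rat d) :: complex \<times> complex \<times> complex \<times> complex"
  have det': "of_rat a * of_rat d - of_rat b * of_rat c \<noteq> (0::complex)"
    using det by (simp flip: of_rat_mult of_rat_diff)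
  have "rm_eval phi (mob ?s x) = mob ?s (rm_eval psi x)" for x
    using qeval_qconj[OF qvalid_qpairC[OF valid deg(1)] det'] k
    by (simp add: rm_eval_eq_qeval deg qconj_of_rat conj qeval_qscale flip: qscale_of_rat)
  then show ?thesis unfolding lin_conj_Q_def Let_def using det by blast
qed

lemma rational_critical_cycle_normal_form:
  fixes X0 Y0 :: rat
  assumes phi_valid: "rm_valid phi" and deg: "rm_deg phi = 2" and XY: "(X0, Y0) \<noteq> (0, 0)"
    and crit: "qcrit (qpairC phi) (proj_pt (of_rat X0) (of_rat Y0))"
    and per: "qtwo_periodic (qpairC phi) (proj_pt (of_rat X0) (of_rat Y0))"
  obtains a b c d f1 f0 g2 :: rat where "a * d - b * c \<noteq> 0" "f0 \<noteq> 0" "g2 \<noteq> 0"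
    "qconj a b c d (qpair_of phi) = QPair 0 f1 f0 g2 0 0"
proof -
  let ?h = "qpairC phi" and ?H = "qpair_of phi"
  define U V where "U = qF ?H X0 Y0" and "V = qG ?H X0 Y0"
  have XY': "(of_rat X0, of_rat Y0) \<noteq> (0 :: complex, 0)" using XY by simp
  interpret two_cycle ?h "of_rat X0" "of_rat Y0" "of_rat U" "of_rat V"
    using two_cycle_of_qtwo_periodic[OF qvalid_qpairC[OF phi_valid deg] XY' per]
    by (simp add: U_def V_def qF_of_rat qG_of_rat)
  define psi where "psi = qconj U X0 V Y0 ?H"
  have nf: "normal_form = map_qpair of_rat psi"
    unfolding normal_form_def psi_def by (rule qconj_of_rat)
  have shape: "qf2 psi = 0" "qg0 psi = 0" "qg1 psi = 0" "qf0 psi \<noteq> 0" "qg2 psi \<noteq> 0"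
    using normal_form_shape first_critical[OF crit] unfolding nf by (simp_all add: qpair.map_sel)
  have "of_rat (U * Y0 - X0 * V) \<noteq> (0::complex)"
    using det_nonzero by (simp add: of_rat_diff of_rat_mult)
  then have "U * Y0 - X0 * V \<noteq> 0" by simp
  then show ?thesis
    using that[of U Y0 X0 V "qf0 psi" "qg2 psi" "qf1 psi"] shape qpair.collapse[of psi]
    unfolding psi_def by metis
qed

lemma rational_critical_cycle_conj_phi_v:
  fixes X0 Y0 :: rat
  assumes phi_valid: "rm_valid phi" and deg: "rm_deg phi = 2" and aut: "Aut_trivial phi"
    and XY: "(X0, Y0) \<noteq> (0, 0)"
    and crit: "qcrit (qpairC phi) (proj_pt (of_rat X0) (of_rat Y0))"
    and per: "qtwo_periodic (qpairC phi) (proj_pt (of_rat X0) (of_rat Y0))"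
  shows "\<exists>v. v \<noteq> 0 \<and> lin_conj_Q phi (phi_v v)"
proof -
  obtain a b c d f1 f0 g2 where det: "a * d - b * c \<noteq> 0" and f0: "f0 \<noteq> 0" and g2: "g2 \<noteq> 0"
    and nf: "qconj a b c d (qpair_of phi) = QPair 0 f1 f0 g2 0 0"
    using rational_critical_cycle_normal_form[OF phi_valid deg XY crit per] .
  show ?thesis
  proof (cases "f1 = 0")
    case True
    have conj: "qconj (of_rat a) (of_rat b) (of_rat c) (of_rat d) (qpairC phi)
        = QPair 0 0 (of_rat f0) (of_rat g2) 0 0"
      using nf True by (simp add: qconj_of_rat)
    have det': "of_rat a * of_rat d - of_rat b * of_rat c \<noteq> (0::complex)"
      using det by (simp flip: of_rat_mult of_rat_diff)
    obtain \<omega> :: complex where \<omega>: "\<omega>^2 + \<omega> + 1 = 0" using cube_root_of_unity_exists by blast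
    interpret galois_pair 0 0 by unfold_locales simp_all
    have "mob_alg (rot_conj (of_rat a) (of_rat b) (of_rat c) (of_rat d) \<omega>)"
      by (rule mob_alg_rot_conj[OF conjugates_rat conjugates_rat conjugates_rat conjugates_rat \<omega>])
        (simp_all flip: of_rat_mult)
    then show ?thesis
      using not_Aut_trivial_if_conj_inverse_square[OF phi_valid deg det' conj \<omega>] aut by blast
  next
    case False
    obtain l k w where lkw: "l \<noteq> 0" "k \<noteq> 0" "w \<noteq> 0"
      "qconj l 0 0 1 (QPair 0 f1 f0 g2 0 0) = qscale k (qpair_of (phi_v w))"
      using normal_form_rescale[OF False f0 g2] unfolding qpair_of_phi_v by metis
    have "qconj (a * l) b (c * l) d (qpair_of phi) = qscale k (qpair_of (phi_v w))"
      using lkw(4) nf qconj_qconj[of l 0 0 1 a b c d "qpair_of phi"] by simp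
    moreover have "(a * l) * d - b * (c * l) \<noteq> 0"
      using det lkw(1) by (simp add: algebra_simps flip: right_diff_distrib)
    ultimately have "lin_conj_Q phi (phi_v w)"
      using lin_conj_Q_of_qconj[OF phi_valid deg rm_deg_phi_v[OF lkw(3)] _ lkw(2)] by blast
    then show ?thesis using lkw(3) by blast
  qed
qed

theorem lemma2p5:
  fixes phi :: ratmap
  assumes "rm_valid phi"
    and "rm_deg phi = 2"
    and "\<exists>P. alg_pt P \<and> critical_pt phi P \<and> two_periodic phi P"
    and "Aut_trivial phi"
  shows "\<exists>v :: rat. v \<noteq> 0 \<and> lin_conj_Q phi (phi_v v)"
proof -
  obtain P where "critical_pt phi P" "two_periodic phi P" using assms(3) by blast
  then have crit: "qcrit (qpairC phi) P" and per: "qtwo_periodic (qpairC phi) P"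
    using critical_pt_iff_qcrit[OF assms(1,2)] rm_eval_eq_qeval[OF assms(2)]
    by (simp_all add: two_periodic_def qtwo_periodic_def)
  show ?thesis
  proof (cases P rule: proj_pt_rational_cases)
    case (rational X0 Y0)
    then show ?thesis
      using rational_critical_cycle_conj_phi_v[OF assms(1,2,4)] crit per by blast
  next
    case (irrational z)
    then show ?thesis
      using irrational_critical_cycle_not_Aut_trivial[OF assms(1,2)] crit per assms(4) by blast
  qed
qed

end
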